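(* Suppose $1/n\ll\varepsilon_3\ll\varepsilon_4\ll1$. Let $G$ be a digraph on $n$ vertices with $\delta^0(G)\geq n/2$ and let $A,B,S,T$ be a partition of $V(G)$ satisfying the $AB$-conditions. Let $C$ be an oriented cycle on $n$ vertices with $\sigma(C)<\varepsilon_4 n$. Then there is an exceptional cover of $G$ (with respect to $C$ and $A,B,S,T$) of length at most $21\varepsilon_4 n$.
   Context: Digraphs have no loops and at most one edge in each direction between two vertices; $\delta^0$ is the minimum semidegree; $d^+_X(x)=|N^+(x)\cap X|$, $d^-_X(x)=|N^-(x)\cap X|$, $d^\pm_X(x)\geq c$ means both $\geq c$ and $d^\pm_X(x)<c$ means both $<c$. $G[A,B]$ is the digraph on $A\cup B$ with edges of $G$ between $A$ and $B$ in either direction. The $AB$-conditions on a partition $A,B,S,T$ of sizes $a,b,s,t$: $a\leq b$, $s\leq t$; $\lfloor n/2\rfloor-\varepsilon_3 n\leq a,b\leq\lceil n/2\rceil+\varepsilon_3n$; $\delta^0(G[A,B])\geq n/50$; $d^\pm_B(x)\geq n/2-\varepsilon_3n$ for all but at most $\varepsilon_3n$ vertices $x\in A$; $d^\pm_A(x)\geq n/2-\varepsilon_3n$ for all but at most $\varepsilon_3n$ vertices $x\in B$; $s+t\leq\varepsilon_3n$; $d^-_A(x),d^+_B(x)\geq n/50$ for all $x\in S$; $d^-_B(x),d^+_A(x)\geq n/50$ for all $x\in T$; if $a<b$ then $d^\pm_B(x)<n/20$ for all $x\in B$, $d^-_B(x)<n/20$ for all $x\in S$ and $d^+_B(x)<n/20$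 for all $x\in T$. For an oriented cycle $C$, $\sigma(C)$ is the number of vertices of outdegree $0$ in $C$. An exceptional cover of $G$ is a path $P\subseteq G$ which is a copy (image under an injective edge- and orientation-preserving map) of some subpath of $C$ such that: $P$ covers $S\cup T$ (i.e. $S\cup T\subseteq V(P)$); both endvertices of $P$ lie in $A$; and $|A\setminus V(P)|+1=|B\setminus V(P)|$. Length is the number of edges. The hierarchy $\alpha\ll\beta$ means $\alpha$ is sufficiently small as a function of $\beta$. *)

theory Defs
  imports Complex_Main
begin

text \<open>No loops; as a relation
  there is at most one edge in each direction.\<close>
definition digraph :: "nat set \<Rightarrow> (nat \<Rightarrow> nat \<Rightarrow> bool) \<Rightarrow> bool" where
  "digraph V E \<longleftrightarrow> finite V \<and> (\<forall>x y. E x y \<longrightarrow> x \<in> V \<and> y \<in> V) \<and> (\<forall>x. \<not> E x x)"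

definition dout :: "(nat \<Rightarrow> nat \<Rightarrow> bool) \<Rightarrow> nat set \<Rightarrow> nat \<Rightarrow> nat" where
  "dout E X x = card {y \<in> X. E x y}"

definition din :: "(nat \<Rightarrow> nat \<Rightarrow> bool) \<Rightarrow> nat set \<Rightarrow> nat \<Rightarrow> nat" where
  "din E X x = card {y \<in> X. E y x}"

definition min_semideg_ge :: "nat set \<Rightarrow> (nat \<Rightarrow> nat \<Rightarrow> bool) \<Rightarrow> real \<Rightarrow> bool" where
  "min_semideg_ge V E c \<longleftrightarrow> (\<forall>x\<in>V. real (dout E V x) \<ge> c \<and> real (din E V x) \<ge> c)"

text \<open>\<delta>^0(G[A,B]) \<ge> c, where G[A,B] has vertex set A \<union> B and the edges of G
  between A and B (A, B disjoint).\<close>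
definition bip_semideg_ge :: "(nat \<Rightarrow> nat \<Rightarrow> bool) \<Rightarrow> nat set \<Rightarrow> nat set \<Rightarrow> real \<Rightarrow> bool" where
  "bip_semideg_ge E A B c \<longleftrightarrow>
     (\<forall>x\<in>A. real (dout E B x) \<ge> c \<and> real (din E B x) \<ge> c) \<and>
     (\<forall>x\<in>B. real (dout E A x) \<ge> c \<and> real (din E A x) \<ge> c)"

definition AB_conditions ::
  "real \<Rightarrow> nat \<Rightarrow> nat set \<Rightarrow> (nat \<Rightarrow> nat \<Rightarrow> bool) \<Rightarrow> nat set \<Rightarrow> nat set \<Rightarrow> nat set \<Rightarrow> nat set \<Rightarrow> bool" where
  "AB_conditions eps3 n V E A B S T \<longleftrightarrow>
     A \<union> B \<union> S \<union> T = V \<and> A \<inter> B = {} \<and> A \<inter> S = {} \<and> A \<inter> T = {} \<and>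
     B \<inter> S = {} \<and> B \<inter> T = {} \<and> S \<inter> T = {} \<and>
     card A \<le> card B \<and> card S \<le> card T \<and>
     real_of_int \<lfloor>real n / 2\<rfloor> - eps3 * n \<le> real (card A) \<and>
     real (card A) \<le> real_of_int \<lceil>real n / 2\<rceil> + eps3 * n \<and>
     real_of_int \<lfloor>real n / 2\<rfloor> - eps3 * n \<le> real (card B) \<and>
     real (card B) \<le> real_of_int \<lceil>real n / 2\<rceil> + eps3 * n \<and>
     bip_semideg_ge E A B (real n / 50) \<and>
     real (card {x \<in> A. \<not> (real (dout E B x) \<ge> real n / 2 - eps3 * n \<and>
                             real (din E B x) \<ge> real n / 2 - eps3 * n)}) \<le> eps3 * n \<and>
     real (card {x \<in> B. \<not> (real (dout E A x) \<ge> real n / 2 - eps3 * n \<and>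
                             real (din E A x) \<ge> real n / 2 - eps3 * n)}) \<le> eps3 * n \<and>
     real (card S + card T) \<le> eps3 * n \<and>
     (\<forall>x\<in>S. real (din E A x) \<ge> real n / 50 \<and> real (dout E B x) \<ge> real n / 50) \<and>
     (\<forall>x\<in>T. real (din E B x) \<ge> real n / 50 \<and> real (dout E A x) \<ge> real n / 50) \<and>
     (card A < card B \<longrightarrow>
        (\<forall>x\<in>B. real (dout E B x) < real n / 20 \<and> real (din E B x) < real n / 20) \<and>
        (\<forall>x\<in>S. real (din E B x) < real n / 20) \<and>
        (\<forall>x\<in>T. real (dout E B x) < real n / 20))"

text \<open>An oriented cycle C on n vertices 0,...,n-1: for i < n the edge between
  i and (i+1) mod n is oriented i \<rightarrow> (i+1) mod n iff ori i, otherwise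
  (i+1) mod n \<rightarrow> i.\<close>

text \<open>\<sigma>(C): number of vertices of C of outdegree 0, i.e. both incident edges
  point into the vertex.\<close>
definition sigma_cyc :: "nat \<Rightarrow> (nat \<Rightarrow> bool) \<Rightarrow> nat" where
  "sigma_cyc n ori = card {i. i < n \<and> \<not> ori i \<and> ori ((i + n - 1) mod n)}"

definition copy_of_subpath ::
  "nat \<Rightarrow> (nat \<Rightarrow> bool) \<Rightarrow> nat set \<Rightarrow> (nat \<Rightarrow> nat \<Rightarrow> bool) \<Rightarrow> nat \<Rightarrow> nat list \<Rightarrow> bool" where
  "copy_of_subpath n ori V E j P \<longleftrightarrow>
     j < n \<and> P \<noteq> [] \<and> length P \<le> n \<and> distinct P \<and> set P \<subseteq> V \<and>
     (\<forall>m. Suc m < length P \<longrightarrow>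
        (if ori ((j + m) mod n) then E (P ! m) (P ! Suc m) else E (P ! Suc m) (P ! m)))"

definition exceptional_cover ::
  "nat \<Rightarrow> (nat \<Rightarrow> bool) \<Rightarrow> nat set \<Rightarrow> (nat \<Rightarrow> nat \<Rightarrow> bool) \<Rightarrow> nat set \<Rightarrow> nat set \<Rightarrow> nat set \<Rightarrow> nat set \<Rightarrow> nat list \<Rightarrow> bool" where
  "exceptional_cover n ori V E A B S T P \<longleftrightarrow>
     (\<exists>j. copy_of_subpath n ori V E j P) \<and>
     S \<union> T \<subseteq> set P \<and> hd P \<in> A \<and> last P \<in> A \<and>
     card (A - set P) + 1 = card (B - set P)"

end

theory Submission
  imports Defs
begin

text \<open>
  Proof of Proposition 6.3: the exceptional cover is built as a path that follows
  the orientation pattern of C from cycle position 0 onwards.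

  First, every exceptional vertex s \<in> S, t \<in> T becomes a one-vertex gadget, and when
  |A| < |B| a matching of |B| - |A| edges xy with y \<in> B, x \<in> B \<union> T (found greedily,
  since vertices of B have small degree inside B) yields two-vertex gadgets. Each
  gadget has linear-size in- and out-neighbourhoods inside A or B, and a "shift"
  recording how much it changes the A/B balance of the path.

  Second, the path is grown greedily, alternating between A and B through vertices
  of almost full degree into the other side, in blocks of six cycle positions. In a
  block where four consecutive edges of C point the same way, the next gadget is
  spliced in. Every other block contains a change of direction of C, and there are
  at most 2 \<sigma>(C) + 1 of those, so after |gadgets| + 2 \<sigma>(C) + 1 blocks every gadget
  is placed. The invariant on the A/B balance then gives |A \ P| + 1 = |B \ P| once
  the path ends in A, and its length is O(eps3 n + \<sigma>(C)), at most 21 eps4 n.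
\<close>

fun orient_chain :: "(nat \<Rightarrow> nat \<Rightarrow> bool) \<Rightarrow> (nat \<Rightarrow> bool) \<Rightarrow> nat \<Rightarrow> nat list \<Rightarrow> bool" where
  "orient_chain E ori p (x # y # zs) =
     ((if ori p then E x y else E y x) \<and> orient_chain E ori (Suc p) (y # zs))"
| "orient_chain E ori p _ = True"

lemma orient_chain_append:
  "xs \<noteq> [] \<Longrightarrow> orient_chain E ori p (xs @ ys) \<longleftrightarrow>
     orient_chain E ori p xs \<and> orient_chain E ori (p + length xs - 1) (last xs # ys)"
proof (induction xs arbitrary: p)
  case Nil then show ?case by simp
next
  case (Cons x xs) then show ?case by (cases xs) auto
qed

lemma orient_chain_snoc:
  "xs \<noteq> [] \<Longrightarrow> orient_chain E ori p (xs @ [y]) \<longleftrightarrow> orient_chain E ori p xs \<and>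
     (if ori (p + length xs - 1) then E (last xs) y else E y (last xs))"
  by (simp add: orient_chain_append)

lemma orient_chain_nth:
  "orient_chain E ori p xs \<Longrightarrow> Suc m < length xs \<Longrightarrow>
     (if ori (p + m) then E (xs!m) (xs!Suc m) else E (xs!Suc m) (xs!m))"
proof (induction E ori p xs arbitrary: m rule: orient_chain.induct)
  case (1 E ori p x y zs)
  show ?case
  proof (cases m)
    case (Suc k)
    then show ?thesis using "1.IH"[of k] "1.prems" by auto
  qed (use "1.prems" in auto)
qed auto

lemma card_Int_lower:
  assumes "finite C" "X \<subseteq> C" "Y \<subseteq> C"
  shows "real (card X) + real (card Y) - real (card C) \<le> real (card (X \<inter> Y))"
proof -
  have "finite X" "finite Y" using assms by (auto intro: finite_subset)
  then have "card (X \<union> Y) + card (X \<inter> Y) = card X + card Y" by (rule card_Un_Int[symmetric])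
  moreover have "card (X \<union> Y) \<le> card C" using assms by (intro card_mono) auto
  ultimately show ?thesis by linarith
qed

lemma card_Diff_lower: "finite Y \<Longrightarrow> real (card X) - real (card Y) \<le> real (card (X - Y))"
  using diff_card_le_card_Diff[of Y X] by linarith

text \<open>For a 0/1 sequence f on 0..M, the number of rises minus the number of falls
  is determined by the endpoints; hence the number of changes of value is at most
  twice the number of falls plus one. Applied to the orientation of C, a fall is a
  sink of C, so this bounds the direction changes along C by 2 \<sigma>(C) + 1.\<close>
lemma card_upto_Suc:
  fixes M :: nat
  shows "card {m. 1 \<le> m \<and> m \<le> Suc M \<and> Q m} = card {m. 1 \<le> m \<and> m \<le> M \<and> Q m} + (if Q (Suc M) then 1 else 0)"
proof -
  have "{m. 1 \<le> m \<and> m \<le> Suc M \<and> Q m} = {m. 1 \<le> m \<and> m \<le> M \<and> Q m} \<union> (if Q (Suc M) then {Suc M} else {})"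
    by (auto simp: le_Suc_eq)
  moreover have "finite {m. 1 \<le> m \<and> m \<le> M \<and> Q m}" by (rule finite_subset[of _ "{..M}"]) auto
  ultimately show ?thesis by (auto simp: card_insert_if)
qed

lemma rises_minus_falls:
  fixes M :: nat and f :: "nat \<Rightarrow> bool"
  shows "int (card {m. 1 \<le> m \<and> m \<le> M \<and> \<not> f (m-1) \<and> f m}) - int (card {m. 1 \<le> m \<and> m \<le> M \<and> f (m-1) \<and> \<not> f m})
     = (if f M then 1 else 0) - (if f 0 then 1 else 0)"
proof (induction M)
  case 0
  have empty: "\<And>Q. {m::nat. 1 \<le> m \<and> m \<le> 0 \<and> Q m} = {}" by auto
  show ?case by (simp only: empty)
next
  case (Suc M)
  then show ?case unfolding card_upto_Suc by (cases "f M"; cases "f (Suc M)") simp_all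
qed

lemma changes_le_falls:
  fixes M :: nat and f :: "nat \<Rightarrow> bool"
  shows "card {m. 1 \<le> m \<and> m \<le> M \<and> f (m-1) \<noteq> f m} \<le> 2 * card {m. 1 \<le> m \<and> m \<le> M \<and> f (m-1) \<and> \<not> f m} + 1"
proof -
  define rises where "rises = {m. 1 \<le> m \<and> m \<le> M \<and> \<not> f (m-1) \<and> f m}"
  define falls where "falls = {m. 1 \<le> m \<and> m \<le> M \<and> f (m-1) \<and> \<not> f m}"
  have "{m. 1 \<le> m \<and> m \<le> M \<and> f (m-1) \<noteq> f m} = rises \<union> falls"
    unfolding rises_def falls_def by auto
  then have "card {m. 1 \<le> m \<and> m \<le> M \<and> f (m-1) \<noteq> f m} \<le> card rises + card falls"
    by (simp add: card_Un_le)
  moreover have "card rises \<le> card falls + 1"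
    using rises_minus_falls[of M f] unfolding rises_def falls_def by (simp split: if_splits)
  ultimately show ?thesis unfolding falls_def by linarith
qed

text \<open>Cut the positions 1, 2, ... into blocks of six. Block i is straight if f is
  constant on 6i+1..6i+4; every other block contains a change of f, so there are at
  most as many bent blocks as changes.\<close>
definition straight_block :: "(nat \<Rightarrow> bool) \<Rightarrow> nat \<Rightarrow> bool" where
  "straight_block f i \<longleftrightarrow> f (6*i+1) = f (6*i+2) \<and> f (6*i+2) = f (6*i+3) \<and> f (6*i+3) = f (6*i+4)"

lemma few_bent_blocks:
  "card {j. j < K \<and> \<not> straight_block f j} \<le> 2 * card {m. 1 \<le> m \<and> m \<le> 6*K \<and> f (m-1) \<and> \<not> f m} + 1"
proof -
  define change where "change j = (if f (6*j+1) \<noteq> f (6*j+2) then 6*j+2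
    else if f (6*j+2) \<noteq> f (6*j+3) then 6*j+3 else 6*j+4)" for j
  have "change j div 6 = j" for j unfolding change_def by auto
  then have "inj_on change {j. j < K \<and> \<not> straight_block f j}" by (metis inj_onI)
  moreover have "change ` {j. j < K \<and> \<not> straight_block f j} \<subseteq> {m. 1 \<le> m \<and> m \<le> 6*K \<and> f (m-1) \<noteq> f m}"
    unfolding change_def straight_block_def by (auto simp: add.commute)
  moreover have "finite {m. 1 \<le> m \<and> m \<le> 6*K \<and> f (m-1) \<noteq> f m}"
    by (rule finite_subset[of _ "{..6*K}"]) auto
  ultimately have "card {j. j < K \<and> \<not> straight_block f j} \<le> card {m. 1 \<le> m \<and> m \<le> 6*K \<and> f (m-1) \<noteq> f m}"
    by (rule card_inj_on_le)
  then show ?thesis using changes_le_falls[of "6*K" f] by linarith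
qed

text \<open>Greedy matching: a finite set of pairs in which every vertex lies in at most
  D > 0 pairs contains m vertex-disjoint pairs as soon as it has 2 D m pairs,
  because choosing one pair destroys at most 2 D others.\<close>
definition disjoint_pairs :: "('a \<times> 'a) set \<Rightarrow> bool" where
  "disjoint_pairs M \<longleftrightarrow> (\<forall>p\<in>M. \<forall>q\<in>M. p \<noteq> q \<longrightarrow> {fst p, snd p} \<inter> {fst q, snd q} = {})"

lemma greedy_matching:
  fixes Eh :: "('a \<times> 'a) set" and D :: real
  assumes "finite Eh" "\<forall>v. real (card {e\<in>Eh. fst e = v \<or> snd e = v}) \<le> D" "0 < D"
    "2 * D * real m \<le> real (card Eh)"
  shows "\<exists>M \<subseteq> Eh. card M = m \<and> disjoint_pairs M"
  using assms
proof (induction m arbitrary: Eh)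
  case 0 then show ?case by (intro exI[of _ "{}"]) (auto simp: disjoint_pairs_def)
next
  case (Suc m)
  have "0 < 2 * D * real (Suc m)" using Suc.prems(3) by simp
  then have "0 < card Eh" using Suc.prems(4) by linarith
  then obtain e0 where e0: "e0 \<in> Eh" by (auto simp: card_gt_0_iff)
  define Eh' where "Eh' = {e\<in>Eh. {fst e, snd e} \<inter> {fst e0, snd e0} = {}}"
  define incident where "incident v = {e\<in>Eh. fst e = v \<or> snd e = v}" for v
  have removed_sub: "Eh - Eh' \<subseteq> incident (fst e0) \<union> incident (snd e0)"
    unfolding Eh'_def incident_def by auto
  have "card (Eh - Eh') \<le> card (incident (fst e0)) + card (incident (snd e0))"
    by (rule order_trans[OF card_mono[OF _ removed_sub] card_Un_le])
      (use Suc.prems(1) in \<open>auto simp: incident_def\<close>)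
  then have "real (card (Eh - Eh')) \<le> real (card (incident (fst e0))) + real (card (incident (snd e0)))"
    by (metis of_nat_add of_nat_mono)
  moreover have deg_incident: "real (card (incident v)) \<le> D" for v
    using Suc.prems(2) unfolding incident_def by blast
  ultimately have removed: "real (card (Eh - Eh')) \<le> 2 * D"
    using deg_incident[of "fst e0"] deg_incident[of "snd e0"] by linarith
  have fin': "finite Eh'" and sub': "Eh' \<subseteq> Eh" using Suc.prems(1) unfolding Eh'_def by auto
  have "card Eh = card Eh' + card (Eh - Eh')"
    using card_Diff_subset[OF fin' sub'] card_mono[OF Suc.prems(1) sub'] by simp
  then have size': "2 * D * real m \<le> real (card Eh')"
    using removed Suc.prems(4) by (simp add: algebra_simps)
  have deg': "\<forall>v. real (card {e\<in>Eh'. fst e = v \<or> snd e = v}) \<le> D"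
  proof
    fix v
    have "card {e\<in>Eh'. fst e = v \<or> snd e = v} \<le> card {e\<in>Eh. fst e = v \<or> snd e = v}"
      using Suc.prems(1) sub' by (intro card_mono) auto
    then show "real (card {e\<in>Eh'. fst e = v \<or> snd e = v}) \<le> D"
      using Suc.prems(2) by (meson of_nat_le_iff order_trans)
  qed
  obtain M where M: "M \<subseteq> Eh'" "card M = m" "disjoint_pairs M"
    using Suc.IH[OF fin' deg' Suc.prems(3) size'] by blast
  have "e0 \<notin> M" "finite M" using M(1) fin' finite_subset unfolding Eh'_def by auto
  moreover have "disjoint_pairs (insert e0 M)"
    using M(1,3) unfolding Eh'_def disjoint_pairs_def by blast
  ultimately show ?case using M(1,2) e0 sub' by (intro exI[of _ "insert e0 M"]) auto
qed

lemma distinct_pair_vertices: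
  "distinct xs \<Longrightarrow> \<forall>p\<in>set xs. fst p \<noteq> snd p \<Longrightarrow> disjoint_pairs (set xs) \<Longrightarrow>
   distinct (concat (map (\<lambda>p. [fst p, snd p]) xs))"
proof (induction xs)
  case Nil then show ?case by simp
next
  case (Cons p xs)
  have "disjoint_pairs (set xs)" using Cons.prems(3) by (auto simp: disjoint_pairs_def)
  moreover have "\<forall>q\<in>set xs. {fst p, snd p} \<inter> {fst q, snd q} = {}"
    using Cons.prems(1,3) by (auto simp: disjoint_pairs_def)
  ultimately show ?case using Cons by auto
qed

locale exceptional_setup =
  fixes n :: nat and V :: "nat set" and E :: "nat \<Rightarrow> nat \<Rightarrow> bool" and A B S T :: "nat set"
    and ori :: "nat \<Rightarrow> bool" and e3 e4 :: real
  assumes digraph: "digraph V E" and card_V: "card V = n"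
    and semideg: "min_semideg_ge V E (real n / 2)"
    and AB: "AB_conditions e3 n V E A B S T" and sigma_small: "real (sigma_cyc n ori) < e4 * n"
    and e4_pos: "0 < e4" and e4_small: "e4 \<le> 1/2000"
    and e3_pos: "0 < e3" and e3_small: "e3 \<le> e4/100"
    and n_large: "100 \<le> e4 * n"
begin

lemma finite_V: "finite V" using digraph by (simp add: digraph_def)
lemma edge_in_V: "E x y \<Longrightarrow> x \<in> V \<and> y \<in> V" using digraph by (simp add: digraph_def)
lemma no_loop: "\<not> E x x" using digraph by (simp add: digraph_def)

lemma partition: "A \<union> B \<union> S \<union> T = V" "A \<inter> B = {}" "A \<inter> S = {}" "A \<inter> T = {}"
  "B \<inter> S = {}" "B \<inter> T = {}" "S \<inter> T = {}"
  using AB by (auto simp: AB_conditions_def)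

lemma parts_in_V: "A \<subseteq> V" "B \<subseteq> V" "S \<subseteq> V" "T \<subseteq> V" using partition(1) by auto

lemma finite_parts: "finite A" "finite B" "finite S" "finite T"
  using finite_V parts_in_V by (auto intro: finite_subset)

lemma card_le: "card A \<le> card B" "card S \<le> card T" using AB by (auto simp: AB_conditions_def)

lemma n_eq: "n = card A + card B + card S + card T"
proof -
  have "card V = card (A \<union> B \<union> S) + card T"
    using partition finite_parts by (subst partition(1)[symmetric], intro card_Un_disjoint) auto
  also have "card (A \<union> B \<union> S) = card (A \<union> B) + card S"
    using partition finite_parts by (intro card_Un_disjoint) auto
  also have "card (A \<union> B) = card A + card B"
    using partition finite_parts by (intro card_Un_disjoint) auto
  finally show ?thesis using card_V by simp
qed

lemma scales: "e3 * n \<le> e4 * n / 100" "e4 * n \<le> n / 2000" "0 \<le> e3 * n" "real n \<ge> 200000"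
proof -
  show "e3 * n \<le> e4 * n / 100" using mult_right_mono[OF e3_small, of "real n"] by simp
  show "e4 * n \<le> n / 2000" using mult_right_mono[OF e4_small, of "real n"] by simp
  then show "real n \<ge> 200000" using n_large by linarith
  show "0 \<le> e3 * n" using e3_pos by simp
qed

lemma sizes: "real (card A) \<le> real n / 2 + 1 + e3 * n" "real (card B) \<le> real n / 2 + 1 + e3 * n"
  "real (card A) \<ge> real n / 2 - 1 - e3 * n" "real (card B) \<ge> real n / 2 - 1 - e3 * n"
  "real (card S + card T) \<le> e3 * n"
proof -
  have "real_of_int \<lceil>real n / 2\<rceil> \<le> real n / 2 + 1" by (rule of_int_ceiling_le_add_one)
  moreover have "real_of_int \<lfloor>real n / 2\<rfloor> \<ge> real n / 2 - 1"
    using real_of_int_floor_gt_diff_one[of "real n / 2"] by linarith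
  ultimately show "real (card A) \<le> real n / 2 + 1 + e3 * n" "real (card B) \<le> real n / 2 + 1 + e3 * n"
    "real (card A) \<ge> real n / 2 - 1 - e3 * n" "real (card B) \<ge> real n / 2 - 1 - e3 * n"
    "real (card S + card T) \<le> e3 * n"
    using AB unfolding AB_conditions_def by linarith+
qed

lemma imbalance_small: "real (card B - card A) \<le> 2 * e3 * n + 2"
  using sizes(2,3) card_le(1) by (simp add: of_nat_diff)

definition side :: "bool \<Rightarrow> nat set" where
  "side b = (if b then A else B)"

definition good :: "bool \<Rightarrow> nat set" where
  "good b = {x\<in>side b. real (dout E (side (\<not>b)) x) \<ge> real n / 2 - e3 * n \<and>
                      real (din E (side (\<not>b)) x) \<ge> real n / 2 - e3 * n}"

definition cyc_edge :: "nat \<Rightarrow> nat \<Rightarrow> nat \<Rightarrow> bool" where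
  "cyc_edge p x y = (if ori p then E x y else E y x)"

lemma side_in_V: "side b \<subseteq> V" using parts_in_V by (auto simp: side_def)
lemma finite_side: "finite (side b)" using finite_parts by (auto simp: side_def)
lemma good_in_side: "good b \<subseteq> side b" by (auto simp: good_def)
lemma side_iff: "x \<in> side b \<Longrightarrow> x \<in> A \<longleftrightarrow> b" "x \<in> side b \<Longrightarrow> x \<in> B \<longleftrightarrow> \<not> b"
  using partition(2) by (auto simp: side_def)
lemma side_size: "real (card (side b)) \<le> real n / 2 + 1 + e3 * n"
  using sizes by (auto simp: side_def)

lemma side_degree: "x \<in> side b \<Longrightarrow> real n / 50 \<le> real (card {y\<in>side (\<not>b). cyc_edge p x y})"
  using AB by (cases b; cases "ori p")
    (auto simp: AB_conditions_def side_def cyc_edge_def bip_semideg_ge_def dout_def din_def)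

lemma good_degree: "x \<in> good b \<Longrightarrow> real n / 2 - e3 * n \<le> real (card {y\<in>side (\<not>b). cyc_edge p x y})"
  by (cases b; cases "ori p") (auto simp: good_def side_def cyc_edge_def dout_def din_def)

lemma few_bad: "real (card (side b - good b)) \<le> e3 * n"
proof -
  have "side True - good True = {x \<in> A. \<not> (real (dout E B x) \<ge> real n / 2 - e3 * n \<and>
                             real (din E B x) \<ge> real n / 2 - e3 * n)}"
    "side False - good False = {x \<in> B. \<not> (real (dout E A x) \<ge> real n / 2 - e3 * n \<and>
                             real (din E A x) \<ge> real n / 2 - e3 * n)}"
    by (auto simp: side_def good_def)
  then show ?thesis using AB by (cases b) (auto simp: AB_conditions_def)
qed

lemma many_good: "X \<subseteq> side b \<Longrightarrow> real (card X) - e3 * n \<le> real (card (X \<inter> good b))"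
proof -
  assume X: "X \<subseteq> side b"
  have "X \<inter> good b = X - (side b - good b)" using X by auto
  then show ?thesis
    using card_Diff_lower[of "side b - good b" X] finite_side few_bad[of b] by simp
qed

lemma good_into_large: "c \<in> good (\<not>b) \<Longrightarrow> X \<subseteq> side b \<Longrightarrow>
   real (card X) - 2 * e3 * n - 1 \<le> real (card {a\<in>X. cyc_edge p c a})"
proof -
  assume c: "c \<in> good (\<not>b)" and X: "X \<subseteq> side b"
  have "{a\<in>X. cyc_edge p c a} = {y\<in>side (\<not>\<not>b). cyc_edge p c y} \<inter> X" using X by auto
  moreover have "real (card {y\<in>side (\<not>\<not>b). cyc_edge p c y}) + real (card X) - real (card (side b))
     \<le> real (card ({y\<in>side (\<not>\<not>b). cyc_edge p c y} \<inter> X))"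
    using X finite_side by (intro card_Int_lower) auto
  ultimately show ?thesis using good_degree[OF c, of p] side_size[of b] by simp
qed

lemma sinks_le_sigma:
  assumes "M < n"
  shows "card {m. 1 \<le> m \<and> m \<le> M \<and> ori (m-1) \<and> \<not> ori m} \<le> sigma_cyc n ori"
  unfolding sigma_cyc_def
proof (rule card_mono)
  show "finite {i. i < n \<and> \<not> ori i \<and> ori ((i + n - 1) mod n)}" by simp
  have "(m + n - 1) mod n = m - 1" if "1 \<le> m" "m < n" for m
    using that by (metis Nat.add_diff_assoc2 le_add_diff_inverse2 less_imp_diff_less mod_add_self2 mod_less)
  then show "{m. 1 \<le> m \<and> m \<le> M \<and> ori (m - 1) \<and> \<not> ori m} \<subseteq> {i. i < n \<and> \<not> ori i \<and> ori ((i + n - 1) mod n)}"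
    using assms by auto
qed

end

text \<open>A gadget is a path on one or two vertices outside A that the cover has to
  contain, together with n/50 possible predecessors (g_in, all inside one side) and
  successors (g_out, inside one side). A path alternating between A and B that
  starts in A satisfies |A \<inter> P| - |B \<inter> P| = [last P \<in> A]; splicing a gadget into it,
  entered from g_in and left through g_out, lowers this balance by g_shift.\<close>
datatype gadget = Gadget (g_verts: "nat list") (g_in: "nat set") (g_in_side: bool)
  (g_out: "nat set") (g_out_side: bool) (g_shift: nat)

text \<open>Where the cycle edges point forwards (d = True) a gadget is traversed from an
  in-neighbour through its vertices to an out-neighbour; where they point backwards,
  in the reverse order.\<close>
definition entry_set :: "bool \<Rightarrow> gadget \<Rightarrow> nat set" where
  "entry_set d g = (if d then g_in g else g_out g)"

definition entry_side :: "bool \<Rightarrow> gadget \<Rightarrow> bool" where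
  "entry_side d g = (if d then g_in_side g else g_out_side g)"

definition exit_set :: "bool \<Rightarrow> gadget \<Rightarrow> nat set" where
  "exit_set d g = (if d then g_out g else g_in g)"

definition exit_side :: "bool \<Rightarrow> gadget \<Rightarrow> bool" where
  "exit_side d g = (if d then g_out_side g else g_in_side g)"

definition traversal :: "bool \<Rightarrow> gadget \<Rightarrow> nat list" where
  "traversal d g = (if d then g_verts g else rev (g_verts g))"

context exceptional_setup begin

definition valid_gadget :: "gadget \<Rightarrow> bool" where
  "valid_gadget g \<longleftrightarrow>
    ((\<exists>v. g_verts g = [v]) \<or> (\<exists>v w. g_verts g = [v, w] \<and> E v w)) \<and> set (g_verts g) \<subseteq> V - A \<and>
    g_in g \<subseteq> side (g_in_side g) \<and> (\<forall>x\<in>g_in g. E x (hd (g_verts g))) \<and>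
    real n / 50 \<le> real (card (g_in g)) \<and>
    g_out g \<subseteq> side (g_out_side g) \<and> (\<forall>x\<in>g_out g. E (last (g_verts g)) x) \<and>
    real n / 50 \<le> real (card (g_out g)) \<and>
    int (of_bool (g_in_side g)) + int (of_bool (g_out_side g)) - 1 - int (card (B \<inter> set (g_verts g)))
      = - int (g_shift g)"

text \<open>If |A| < |B|, the imbalance is repaired by |B| - |A| disjoint edges xy with
  y \<in> B and x \<in> B \<union> T; each such edge passes through two vertices outside A at
  once.\<close>
definition matching_edges :: "(nat \<times> nat) set" where
  "matching_edges = {p. snd p \<in> B \<and> fst p \<in> B \<union> T \<and> E (fst p) (snd p)}"

lemma finite_matching_edges: "finite matching_edges"
  by (rule finite_subset[of _ "V \<times> V"]) (use finite_V edge_in_V in \<open>auto simp: matching_edges_def\<close>)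

text \<open>When |A| < |B| the vertices of B have degree less than n/20 inside B, so every
  vertex lies in few of these pairs.\<close>
lemma matching_edges_degree:
  assumes "card A < card B"
  shows "real (card {e\<in>matching_edges. fst e = v \<or> snd e = v}) \<le> real n / 10 + real (card T)"
proof -
  have B_sparse: "\<forall>x\<in>B. real (dout E B x) < real n / 20 \<and> real (din E B x) < real n / 20"
    and T_sparse: "\<forall>x\<in>T. real (dout E B x) < real n / 20"
    using AB assms unfolding AB_conditions_def by auto
  define Out where "Out = (if v \<in> B \<union> T then {x\<in>B. E v x} else {})"
  define In where "In = (if v \<in> B then {y\<in>B. E y v} else {})"
  have incident: "{e\<in>matching_edges. fst e = v \<or> snd e = v} \<subseteq> {v} \<times> Out \<union> (In \<union> T) \<times> {v}"
    by (auto simp: matching_edges_def Out_def In_def)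
  have "card {e\<in>matching_edges. fst e = v \<or> snd e = v} \<le> card ({v} \<times> Out) + card ((In \<union> T) \<times> {v})"
    by (rule order_trans[OF card_mono[OF _ incident] card_Un_le]) (auto simp: Out_def In_def finite_parts)
  also have "\<dots> \<le> card Out + (card In + card T)"
    by (simp add: card_cartesian_product card_Un_le)
  finally have "real (card {e\<in>matching_edges. fst e = v \<or> snd e = v})
      \<le> real (card Out) + real (card In) + real (card T)"
    by (simp only: of_nat_add[symmetric] of_nat_le_iff add.assoc)
  moreover have "real (card Out) \<le> real n / 20"
    using B_sparse T_sparse by (auto simp: Out_def dout_def less_imp_le)
  moreover have "real (card In) \<le> real n / 20"
    using B_sparse by (auto simp: In_def din_def less_imp_le)
  ultimately show ?thesis by linarith
qed

text \<open>Each y \<in> B has at least n/2 - |A| - |S| \<ge> (|B| - |A|)/2 in-neighbours in B \<union> T.\<close>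
lemma matching_edges_many:
  assumes "card A < card B"
  shows "real (card B) * (real (card B - card A) / 2) \<le> real (card matching_edges)"
proof -
  have "matching_edges = (\<Union>x\<in>B. (\<lambda>y. (y,x)) ` {y\<in>B \<union> T. E y x})"
    unfolding matching_edges_def by auto
  then have "card matching_edges = (\<Sum>x\<in>B. card ((\<lambda>y. (y,x)) ` {y\<in>B \<union> T. E y x}))"
    by (simp only:) (rule card_UN_disjoint, use finite_parts in auto)
  also have "\<dots> = (\<Sum>x\<in>B. card {y\<in>B \<union> T. E y x})"
    by (intro sum.cong refl card_image) (auto simp: inj_on_def)
  finally have count: "real (card matching_edges) = (\<Sum>x\<in>B. real (card {y\<in>B \<union> T. E y x}))"
    by simp
  have "real (card B - card A) / 2 \<le> real (card {y\<in>B \<union> T. E y x})" if x: "x \<in> B" for x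
  proof -
    have "{y\<in>V. E y x} \<subseteq> A \<union> S \<union> {y\<in>B \<union> T. E y x}" using partition(1) by auto
    then have "card {y\<in>V. E y x} \<le> card (A \<union> S \<union> {y\<in>B \<union> T. E y x})"
      by (rule card_mono[rotated]) (use finite_parts in auto)
    also have "\<dots> \<le> card A + card S + card {y\<in>B \<union> T. E y x}"
      by (meson add_le_mono card_Un_le le_refl order_trans)
    finally have "card {y\<in>V. E y x} \<le> card A + card S + card {y\<in>B \<union> T. E y x}" .
    moreover have "real n / 2 \<le> real (din E V x)"
      using semideg x parts_in_V unfolding min_semideg_ge_def by auto
    moreover have "real n = real (card A) + real (card B) + real (card S) + real (card T)"
      using n_eq by simp
    moreover have "real (card B - card A) = real (card B) - real (card A)"
      using assms by (simp add: of_nat_diff)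
    ultimately show ?thesis using card_le(2) unfolding din_def by linarith
  qed
  then show ?thesis unfolding count
    using sum_bounded_below[of B "real (card B - card A) / 2" "\<lambda>x. real (card {y\<in>B \<union> T. E y x})"]
    by (simp add: mult.commute)
qed

lemma B_matching_exists:
  "\<exists>M \<subseteq> matching_edges. card M = card B - card A \<and> disjoint_pairs M"
proof (cases "card A < card B")
  case False
  then show ?thesis by (intro exI[of _ "{}"]) (auto simp: disjoint_pairs_def)
next
  case True
  define D where "D = real n / 10 + real (card T)"
  have "real (card T) \<le> e3 * n" using sizes(5) by simp
  then have "2 * D \<le> real (card B) / 2"
    using sizes(4) scales unfolding D_def by argo
  then have "2 * D * real (card B - card A) \<le> real (card B) / 2 * real (card B - card A)"
    by (rule mult_right_mono) simp
  then have "2 * D * real (card B - card A) \<le> real (card matching_edges)"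
    using matching_edges_many[OF True] by simp
  moreover have "0 < D" using scales unfolding D_def by simp
  ultimately show ?thesis
    using greedy_matching[OF finite_matching_edges _ _ ] matching_edges_degree[OF True] unfolding D_def
    by blast
qed

definition S_gadget :: "nat \<Rightarrow> gadget" where
  "S_gadget s = Gadget [s] {y\<in>A. E y s} True {y\<in>B. E s y} False 0"

definition T_gadget :: "nat \<Rightarrow> gadget" where
  "T_gadget t = Gadget [t] {y\<in>B. E y t} False {y\<in>A. E t y} True 0"

definition edge_gadget :: "nat \<times> nat \<Rightarrow> gadget" where
  "edge_gadget p = Gadget [fst p, snd p]
     (if fst p \<in> T then {z\<in>B. E z (fst p)} else {z\<in>A. E z (fst p)}) (fst p \<notin> T)
     {z\<in>A. E (snd p) z} True 1"

lemma exceptional_degrees: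
  "\<forall>x\<in>S. real (din E A x) \<ge> real n / 50 \<and> real (dout E B x) \<ge> real n / 50"
  "\<forall>x\<in>T. real (din E B x) \<ge> real n / 50 \<and> real (dout E A x) \<ge> real n / 50"
  using AB unfolding AB_conditions_def by auto

lemma valid_S_gadget: "s \<in> S \<Longrightarrow> valid_gadget (S_gadget s)"
  using exceptional_degrees(1) parts_in_V partition
  by (auto simp: valid_gadget_def S_gadget_def side_def din_def dout_def)

lemma valid_T_gadget: "t \<in> T \<Longrightarrow> valid_gadget (T_gadget t)"
  using exceptional_degrees(2) parts_in_V partition
  by (auto simp: valid_gadget_def T_gadget_def side_def din_def dout_def)

lemma valid_edge_gadget: "p \<in> matching_edges \<Longrightarrow> valid_gadget (edge_gadget p)"
proof -
  assume "p \<in> matching_edges"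
  then have p: "snd p \<in> B" "fst p \<in> B \<union> T" "E (fst p) (snd p)" by (auto simp: matching_edges_def)
  have ne: "fst p \<noteq> snd p" using p(3) no_loop by auto
  have out: "real n / 50 \<le> real (card {z\<in>A. E (snd p) z})"
    using AB p(1) unfolding AB_conditions_def bip_semideg_ge_def dout_def by auto
  show ?thesis
  proof (cases "fst p \<in> T")
    case True
    have "real n / 50 \<le> real (card {z\<in>B. E z (fst p)})"
      using exceptional_degrees(2) True unfolding din_def by auto
    moreover have "B \<inter> set [fst p, snd p] = {snd p}" using True p(1) partition(6) by auto
    ultimately show ?thesis using True p ne out parts_in_V partition
      by (auto simp: valid_gadget_def edge_gadget_def side_def)
  next
    case False
    then have x: "fst p \<in> B" using p(2) by auto
    have "real n / 50 \<le> real (card {z\<in>A. E z (fst p)})"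
      using AB x unfolding AB_conditions_def bip_semideg_ge_def din_def by auto
    moreover have "B \<inter> set [fst p, snd p] = {fst p, snd p}" using x p(1) by auto
    ultimately show ?thesis using False p ne out parts_in_V partition x
      by (auto simp: valid_gadget_def edge_gadget_def side_def)
  qed
qed

lemma gadgets_exist:
  "\<exists>gs. (\<forall>g\<in>set gs. valid_gadget g) \<and> distinct (concat (map g_verts gs)) \<and>
     S \<union> T \<subseteq> set (concat (map g_verts gs)) \<and> (\<Sum>g\<leftarrow>gs. g_shift g) = card B - card A \<and>
     length gs \<le> card S + card T + (card B - card A)"
proof -
  obtain M where M: "M \<subseteq> matching_edges" "card M = card B - card A" "disjoint_pairs M"
    using B_matching_exists by blast
  have finM: "finite M" using M(1) finite_matching_edges by (rule finite_subset)
  obtain Ml where Ml: "set Ml = M" "distinct Ml" using finite_distinct_list[OF finM] by blast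
  define Sl where "Sl = sorted_list_of_set S"
  define Tl where "Tl = sorted_list_of_set (T - fst ` M)"
  have lists: "set Sl = S" "distinct Sl" "set Tl = T - fst ` M" "distinct Tl"
    "length Sl = card S" "length Tl = card (T - fst ` M)" "length Ml = card M"
    using finite_parts Ml distinct_card[OF Ml(2)] unfolding Sl_def Tl_def by auto
  have M_edges: "\<forall>p\<in>M. snd p \<in> B \<and> fst p \<in> B \<union> T \<and> E (fst p) (snd p)"
    using M(1) by (auto simp: matching_edges_def)
  define gs where "gs = map S_gadget Sl @ map T_gadget Tl @ map edge_gadget Ml"
  have verts: "concat (map g_verts gs) = Sl @ Tl @ concat (map (\<lambda>p. [fst p, snd p]) Ml)"
    unfolding gs_def by (simp add: S_gadget_def T_gadget_def edge_gadget_def comp_def map_concat)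
  have pair_set: "set (concat (map (\<lambda>p. [fst p, snd p]) Ml)) = fst ` M \<union> snd ` M"
    using Ml(1) by auto
  have "distinct (concat (map (\<lambda>p. [fst p, snd p]) Ml))"
    using Ml M(3) M_edges no_loop by (intro distinct_pair_vertices) auto
  then have "distinct (concat (map g_verts gs))"
    unfolding verts using lists pair_set M_edges partition by auto
  moreover have "\<forall>g\<in>set gs. valid_gadget g"
    unfolding gs_def using lists Ml valid_S_gadget valid_T_gadget valid_edge_gadget M(1) by auto
  moreover have "S \<union> T \<subseteq> set (concat (map g_verts gs))"
    unfolding verts using lists pair_set by auto
  moreover have "(\<Sum>g\<leftarrow>gs. g_shift g) = card B - card A"
    unfolding gs_def using lists M(2) by (simp add: S_gadget_def T_gadget_def edge_gadget_def comp_def sum_list_triv)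
  moreover have "length gs \<le> card S + card T + (card B - card A)"
    using lists M(2) card_mono[OF finite_parts(4), of "T - fst ` M"] unfolding gs_def by auto
  ultimately show ?thesis by blast
qed

lemma good_either: "x \<in> good b \<Longrightarrow> x \<in> good True \<union> good False"
  by (cases b) auto

lemma gadget_ends:
  assumes "valid_gadget g"
  shows "entry_set d g \<subseteq> side (entry_side d g)" "real n / 50 \<le> real (card (entry_set d g))"
    "exit_set d g \<subseteq> side (exit_side d g)" "real n / 50 \<le> real (card (exit_set d g))"
  using assms by (cases d; simp add: valid_gadget_def entry_set_def entry_side_def exit_set_def exit_side_def)+

lemma traversal_facts:
  assumes "valid_gadget g"
  shows "set (traversal d g) = set (g_verts g)" "distinct (traversal d g)"
    "length (traversal d g) \<le> 2"
  using assms no_loop by (auto simp: valid_gadget_def traversal_def)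

lemma traversal_chain:
  assumes g: "valid_gadget g" and a: "a \<in> entry_set d g" and e: "e \<in> exit_set d g"
    and dir: "ori p = d" "ori (Suc p) = d" "ori (Suc (Suc p)) = d"
  shows "orient_chain E ori p (a # traversal d g @ [e])"
proof -
  have shape: "(\<exists>v. g_verts g = [v]) \<or> (\<exists>v w. g_verts g = [v, w] \<and> E v w)"
    and ends: "\<forall>x\<in>g_in g. E x (hd (g_verts g))" "\<forall>x\<in>g_out g. E (last (g_verts g)) x"
    using g by (auto simp: valid_gadget_def)
  from shape show ?thesis
  proof (elim disjE exE conjE)
    fix v assume "g_verts g = [v]"
    then show ?thesis using ends a e dir
      by (cases d) (simp_all add: traversal_def entry_set_def exit_set_def)
  next
    fix v w assume "g_verts g = [v, w]" "E v w"
    then show ?thesis using ends a e dir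
      by (cases d) (simp_all add: traversal_def entry_set_def exit_set_def)
  qed
qed

lemma traversal_balance:
  assumes "valid_gadget g"
  shows "int (of_bool (entry_side d g)) + int (of_bool (exit_side d g)) - 1
           - int (card (B \<inter> set (traversal d g))) = - int (g_shift g)"
  using assms by (cases d) (auto simp: valid_gadget_def entry_side_def exit_side_def traversal_def)

end

locale gadget_system = exceptional_setup +
  fixes gs :: "gadget list"
  assumes gadgets_valid: "\<forall>g\<in>set gs. valid_gadget g"
    and gadgets_distinct: "distinct (concat (map g_verts gs))"
    and gadgets_cover: "S \<union> T \<subseteq> set (concat (map g_verts gs))"
    and shift_total: "(\<Sum>g\<leftarrow>gs. g_shift g) = card B - card A"
    and gadget_count: "length gs \<le> card S + card T + (card B - card A)"
begin

definition gadget_vertices :: "nat set" where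
  "gadget_vertices = set (concat (map g_verts gs))"

definition placed :: "nat \<Rightarrow> nat set" where
  "placed m = set (concat (map g_verts (take m gs)))"

definition shift_sum :: "nat \<Rightarrow> nat" where
  "shift_sum m = (\<Sum>g\<leftarrow>take m gs. g_shift g)"

definition balance :: "nat list \<Rightarrow> int" where
  "balance P = int (card (A \<inter> set P)) - int (card (B \<inter> set P))"

text \<open>The path is built in blocks of six cycle positions; this many blocks suffice,
  and all paths considered are shorter than len_bound.\<close>
definition num_blocks :: nat where
  "num_blocks = length gs + 2 * sigma_cyc n ori + 1"

definition len_bound :: nat where
  "len_bound = 6 * num_blocks + 8"

text \<open>The invariant of the construction: P is a path following C from position 0,
  starting in A and ending at a good vertex, containing exactly the first m gadgets,
  and its A/B balance is that of an alternating path lowered by their shifts.\<close>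
definition partial_cover :: "nat list \<Rightarrow> nat \<Rightarrow> bool" where
  "partial_cover P m \<longleftrightarrow> P \<noteq> [] \<and> distinct P \<and> set P \<subseteq> V \<and> hd P \<in> A \<and>
     orient_chain E ori 0 P \<and> last P \<in> good True \<union> good False \<and>
     set P \<inter> gadget_vertices = placed m \<and>
     balance P = (if last P \<in> A then 1 else 0) - int (shift_sum m) \<and> m \<le> length gs"

lemma gadget_vertices_outside_A: "gadget_vertices \<subseteq> V - A"
  using gadgets_valid unfolding gadget_vertices_def valid_gadget_def by auto

lemma card_gadget_vertices: "card gadget_vertices \<le> 2 * length gs"
proof -
  have "card gadget_vertices \<le> length (concat (map g_verts gs))"
    unfolding gadget_vertices_def by (rule card_length)
  also have "\<dots> = (\<Sum>g\<leftarrow>gs. length (g_verts g))" by (simp add: length_concat comp_def)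
  also have "\<dots> \<le> (\<Sum>g\<leftarrow>gs. 2)"
    using gadgets_valid by (intro sum_list_mono) (auto simp: valid_gadget_def)
  finally show ?thesis by (simp add: sum_list_triv)
qed

lemma few_gadgets: "real (length gs) \<le> 3 * e3 * n + 2"
proof -
  have "real (length gs) \<le> real (card S + card T) + real (card B - card A)"
    using gadget_count by (metis of_nat_add of_nat_mono)
  then show ?thesis using imbalance_small sizes(5) by linarith
qed

lemma room: "real len_bound + real (card gadget_vertices) + 2 < real n / 50 - 3 * e3 * n - 1"
proof -
  have "real len_bound = 6 * real (length gs) + 12 * real (sigma_cyc n ori) + 14"
    by (simp add: len_bound_def num_blocks_def)
  moreover have "real (card gadget_vertices) \<le> 2 * real (length gs)"
    using card_gadget_vertices by (simp add: of_nat_mono)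
  ultimately show ?thesis using few_gadgets sigma_small scales by linarith
qed

lemma len_bound_le_n: "len_bound \<le> n"
proof -
  have "real len_bound \<le> real n" using room scales by linarith
  then show ?thesis by simp
qed

lemma final_length: "real (6 * num_blocks + 1) \<le> 21 * e4 * n"
proof -
  have "real (6 * num_blocks + 1) = 6 * real (length gs) + 12 * real (sigma_cyc n ori) + 7"
    by (simp add: num_blocks_def)
  then show ?thesis using few_gadgets sigma_small scales n_large by linarith
qed

lemma fresh_vertex:
  assumes "length P \<le> len_bound" "real n / 50 - 3 * e3 * n - 1 \<le> real (card X)"
  shows "\<exists>x\<in>X. x \<notin> set P \<and> x \<notin> gadget_vertices \<and> x \<noteq> a"
proof -
  have "finite gadget_vertices" by (simp add: gadget_vertices_def)
  then have "card (insert a (set P \<union> gadget_vertices)) \<le> card (set P \<union> gadget_vertices) + 1"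
    by (simp add: card_insert_if)
  moreover have "card (set P \<union> gadget_vertices) \<le> card (set P) + card gadget_vertices"
    by (rule card_Un_le)
  moreover have "card (set P) \<le> length P" by (rule card_length)
  ultimately have "real (card (insert a (set P \<union> gadget_vertices))) \<le> real len_bound + real (card gadget_vertices) + 1"
    using assms(1) by linarith
  then have "card (insert a (set P \<union> gadget_vertices)) < card X" using room assms(2) by linarith
  moreover have "finite (insert a (set P \<union> gadget_vertices))" using \<open>finite gadget_vertices\<close> by simp
  ultimately obtain x where "x \<in> X" "x \<notin> insert a (set P \<union> gadget_vertices)"
    by (metis card_mono not_le subsetI)
  then show ?thesis by auto
qed

lemma balance_append:
  "set P \<inter> set ws = {} \<Longrightarrow> balance (P @ ws) = balance P + balance ws"
proof -
  assume "set P \<inter> set ws = {}"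
  then have "card (X \<inter> set (P @ ws)) = card (X \<inter> set P) + card (X \<inter> set ws)" for X
    by (subst card_Un_disjoint[symmetric]) (auto simp: Int_Un_distrib)
  then show ?thesis unfolding balance_def by simp
qed

lemma balance_single: "balance [x] = (if x \<in> A then 1 else 0) - (if x \<in> B then 1 else 0)"
  by (simp add: balance_def Int_insert_right)

end

context gadget_system begin

lemma unplaced_gadget:
  assumes "m < length gs"
  shows "set (g_verts (gs!m)) \<inter> placed m = {}" "set (g_verts (gs!m)) \<subseteq> gadget_vertices"
proof -
  have split: "concat (map g_verts gs) =
    concat (map g_verts (take m gs)) @ g_verts (gs!m) @ concat (map g_verts (drop (Suc m) gs))"
    by (subst id_take_nth_drop[OF assms]) simp
  show "set (g_verts (gs!m)) \<inter> placed m = {}"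
    using gadgets_distinct unfolding split placed_def by auto
  show "set (g_verts (gs!m)) \<subseteq> gadget_vertices"
    unfolding gadget_vertices_def split by auto
qed

lemma start_path: "\<exists>P. partial_cover P 0 \<and> length P = 1"
proof -
  have "real (card A) - e3 * n \<le> real (card (A \<inter> good True))"
    using many_good[of A True] by (simp add: side_def)
  then have "card (A \<inter> good True) > 0" using sizes(3) scales by linarith
  then obtain a where a: "a \<in> A" "a \<in> good True" by (auto simp: card_gt_0_iff)
  have "partial_cover [a] 0"
    using a gadget_vertices_outside_A parts_in_V partition(2)
    by (auto simp: partial_cover_def placed_def balance_def shift_sum_def)
  then show ?thesis by auto
qed

lemma extend_alternating:
  assumes P: "partial_cover P m" and len: "length P < len_bound" and last: "last P \<in> side b"
  shows "\<exists>y\<in>good (\<not>b). partial_cover (P @ [y]) m"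
proof -
  let ?p = "length P - 1"
  define X where "X = {y\<in>side (\<not>b). cyc_edge ?p (last P) y} \<inter> good (\<not>b)"
  have "real n / 50 - e3 * n \<le> real (card X)"
    using side_degree[OF last, of ?p] many_good[of "{y\<in>side (\<not>b). cyc_edge ?p (last P) y}" "\<not>b"]
    unfolding X_def by auto
  then have "real n / 50 - 3 * e3 * n - 1 \<le> real (card X)" using scales by linarith
  then obtain y where y: "y \<in> X" "y \<notin> set P" "y \<notin> gadget_vertices"
    using fresh_vertex[of P X "hd P"] len by auto
  have y_side: "y \<in> side (\<not>b)" "y \<in> good (\<not>b)" "cyc_edge ?p (last P) y" using y(1) by (auto simp: X_def)
  have Pf: "P \<noteq> []" "orient_chain E ori 0 P" "set P \<inter> gadget_vertices = placed m"
     "balance P = (if last P \<in> A then 1 else 0) - int (shift_sum m)"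
    using P by (auto simp: partial_cover_def)
  have "orient_chain E ori 0 (P @ [y])"
    using Pf(1,2) y_side(3) by (simp add: orient_chain_snoc cyc_edge_def)
  moreover have "balance (P @ [y]) = (if y \<in> A then 1 else 0) - int (shift_sum m)"
    using balance_append[of P "[y]"] balance_single[of y] Pf(4) y(2) side_iff[OF y_side(1)] side_iff[OF last]
    by auto
  moreover have "set (P @ [y]) \<inter> gadget_vertices = placed m" using Pf(3) y(3) by auto
  ultimately have "partial_cover (P @ [y]) m"
    using P y(2) y_side(2) side_in_V[of "\<not>b"] good_in_side[of "\<not>b"] good_either[OF y_side(2)]
    by (auto simp: partial_cover_def)
  then show ?thesis using y_side by auto
qed

lemma extend_to:
  assumes P: "partial_cover P m" and "length P \<le> k" "k \<le> len_bound"
  shows "\<exists>P'. partial_cover P' m \<and> length P' = k"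
  using assms(2,3)
proof (induction k)
  case 0 then show ?case using P by (auto simp: partial_cover_def)
next
  case (Suc k)
  show ?case
  proof (cases "length P = Suc k")
    case True then show ?thesis using P by auto
  next
    case False
    then obtain P1 where P1: "partial_cover P1 m" "length P1 = k" using Suc by auto
    then have "last P1 \<in> good True \<union> good False" by (simp add: partial_cover_def)
    then obtain b where "last P1 \<in> side b" using good_in_side by blast
    then obtain y where "partial_cover (P1 @ [y]) m"
      using extend_alternating[OF P1(1)] P1(2) Suc.prems by fastforce
    then show ?thesis using P1(2) by auto
  qed
qed

lemma splice_gadget:
  assumes P: "partial_cover P m" and m: "m < length gs" and g: "g = gs ! m"
    and dir: "ori (length P) = d" "ori (length P + 1) = d" "ori (length P + 2) = d"
    and last_side: "last P \<in> side (\<not> entry_side d g)"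
    and a: "a \<in> entry_set d g" "cyc_edge (length P - 1) (last P) a" "a \<notin> set P" "a \<notin> gadget_vertices"
    and e: "e \<in> exit_set d g" "e \<in> good (exit_side d g)" "e \<notin> set P" "e \<notin> gadget_vertices" "e \<noteq> a"
  shows "partial_cover (P @ a # traversal d g @ [e]) (Suc m)"
proof -
  define W where "W = a # traversal d g @ [e]"
  have valid: "valid_gadget g" using m gadgets_valid g by auto
  note trav = traversal_facts[OF valid, of d] and ends = gadget_ends[OF valid, of d]
  have Pf: "P \<noteq> []" "distinct P" "set P \<subseteq> V" "hd P \<in> A" "orient_chain E ori 0 P"
    "set P \<inter> gadget_vertices = placed m" "balance P = (if last P \<in> A then 1 else 0) - int (shift_sum m)"
    using P by (auto simp: partial_cover_def)
  have g_new: "set (g_verts g) \<inter> set P = {}" "set (g_verts g) \<subseteq> gadget_vertices"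
    using unplaced_gadget[OF m] Pf(6) g by auto
  have W_fresh: "set P \<inter> set W = {}" "distinct W"
    using a(3,4) e(3,4,5) g_new trav by (auto simp: W_def)
  have a_side: "a \<in> side (entry_side d g)" and e_side: "e \<in> side (exit_side d g)"
    using ends a(1) e(1) by auto
  have "orient_chain E ori (length P) W"
    unfolding W_def by (rule traversal_chain[OF valid a(1) e(1)]) (use dir in simp_all)
  then have chain: "orient_chain E ori 0 (P @ W)"
    using Pf(1,5) a(2) by (simp add: orient_chain_append W_def cyc_edge_def)
  have balance: "balance (P @ W) = (if e \<in> A then 1 else 0) - int (shift_sum (Suc m))"
  proof -
    have "A \<inter> set (traversal d g) = {}" using valid trav(1) by (auto simp: valid_gadget_def)
    then have "balance (traversal d g) = - int (card (B \<inter> set (traversal d g)))"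
      by (simp add: balance_def)
    moreover have "balance W = balance [a] + balance (traversal d g) + balance [e]"
    proof -
      have "set [a] \<inter> set (traversal d g @ [e]) = {}" "set (traversal d g) \<inter> set [e] = {}"
        using W_fresh(2) by (auto simp: W_def)
      then show ?thesis
        using balance_append[of "[a]" "traversal d g @ [e]"] balance_append[of "traversal d g" "[e]"]
        by (simp add: W_def)
    qed
    moreover have "balance [a] = (if entry_side d g then 1 else - 1)"
      using balance_single[of a] side_iff[OF a_side] by simp
    moreover have "balance [e] = (if exit_side d g then 1 else - 1)" "e \<in> A \<longleftrightarrow> exit_side d g"
      using balance_single[of e] side_iff[OF e_side] by simp_all
    moreover have "balance P = (if entry_side d g then 0 else 1) - int (shift_sum m)"
      using Pf(7) side_iff[OF last_side] by simp
    moreover have "shift_sum (Suc m) = shift_sum m + g_shift g"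
      using m g by (simp add: shift_sum_def take_Suc_conv_app_nth)
    ultimately show ?thesis
      using traversal_balance[OF valid, of d] balance_append[OF W_fresh(1)]
      by (cases "entry_side d g"; cases "exit_side d g") simp_all
  qed
  have placed: "set (P @ W) \<inter> gadget_vertices = placed (Suc m)"
    using Pf(6) g_new(2) a(4) e(4) m g trav(1)
    by (auto simp: W_def placed_def take_Suc_conv_app_nth)
  have "set W \<subseteq> V"
    using a_side e_side side_in_V g_new(2) gadget_vertices_outside_A trav(1) by (auto simp: W_def)
  then have "partial_cover (P @ W) (Suc m)"
    unfolding partial_cover_def
    using Pf(1-4) W_fresh chain balance placed m good_either[OF e(2)] by (simp add: W_def)
  then show ?thesis by (simp add: W_def)
qed

text \<open>Where three consecutive cycle edges point the same way and the path ends at a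
  good vertex of the correct side, gadget m can be inserted using at most four more
  vertices: the entry and exit vertices are chosen among the many fresh candidates.\<close>
lemma insert_gadget_aligned:
  assumes P: "partial_cover P m" and m: "m < length gs" and len: "length P + 4 \<le> len_bound"
    and dir: "ori (length P) = d" "ori (length P + 1) = d" "ori (length P + 2) = d"
    and last_good: "last P \<in> good (\<not> entry_side d (gs!m))"
  shows "\<exists>P'. partial_cover P' (Suc m) \<and> length P' \<le> length P + 4"
proof -
  define g where "g = gs ! m"
  have valid: "valid_gadget g" using m gadgets_valid unfolding g_def by auto
  note ends = gadget_ends[OF valid, of d]
  have "real n / 50 - 3 * e3 * n - 1 \<le> real (card {a\<in>entry_set d g. cyc_edge (length P - 1) (last P) a})"
    using good_into_large[OF last_good[folded g_def] ends(1), of "length P - 1"] ends(2) scales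
    by linarith
  then obtain a where a: "a \<in> entry_set d g" "cyc_edge (length P - 1) (last P) a"
    "a \<notin> set P" "a \<notin> gadget_vertices"
    using fresh_vertex[of P _ 0] len by fastforce
  have "real n / 50 - 3 * e3 * n - 1 \<le> real (card (exit_set d g \<inter> good (exit_side d g)))"
    using many_good[OF ends(3)] ends(4) scales by linarith
  then obtain e where e: "e \<in> exit_set d g" "e \<in> good (exit_side d g)"
    "e \<notin> set P" "e \<notin> gadget_vertices" "e \<noteq> a"
    using fresh_vertex[of P _ a] len by fastforce
  have "last P \<in> side (\<not> entry_side d g)" using last_good good_in_side g_def by auto
  then have "partial_cover (P @ a # traversal d g @ [e]) (Suc m)"
    by (rule splice_gadget[OF P m g_def dir _ a e])
  moreover have "length (P @ a # traversal d g @ [e]) \<le> length P + 4"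
    using traversal_facts(3)[OF valid, of d] by simp
  ultimately show ?thesis by blast
qed

text \<open>With four equally oriented cycle edges, one may first need an alternating step
  to reach the correct side.\<close>
lemma insert_gadget:
  assumes P: "partial_cover P m" and m: "m < length gs" and len: "length P + 6 \<le> len_bound"
    and dir: "ori (length P) = d" "ori (length P + 1) = d" "ori (length P + 2) = d" "ori (length P + 3) = d"
  shows "\<exists>P'. partial_cover P' (Suc m) \<and> length P' \<le> length P + 5"
proof -
  obtain b where b: "last P \<in> good b" using P by (auto simp: partial_cover_def)
  show ?thesis
  proof (cases "b = entry_side d (gs!m)")
    case False
    then have "last P \<in> good (\<not> entry_side d (gs!m))" using b by (cases b) auto
    then show ?thesis using insert_gadget_aligned[OF P m _ dir(1-3)] len by fastforce
  next
    case True
    then have "last P \<in> side (entry_side d (gs!m))" using b good_in_side by auto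
    then obtain y where y: "y \<in> good (\<not> entry_side d (gs!m))" "partial_cover (P @ [y]) m"
      using extend_alternating[OF P] len by fastforce
    have "last (P @ [y]) \<in> good (\<not> entry_side d (gs!m))" using y(1) by simp
    moreover have "length (P @ [y]) + 4 \<le> len_bound" "ori (length (P @ [y])) = d"
      "ori (length (P @ [y]) + 1) = d" using len dir(2,3) by simp_all
    moreover have "ori (length (P @ [y]) + 2) = d"
      using dir(4) by (metis length_append_singleton add_Suc numeral_2_eq_2 numeral_3_eq_3 add_Suc_right)
    ultimately have "\<exists>P'. partial_cover P' (Suc m) \<and> length P' \<le> length (P @ [y]) + 4"
      using insert_gadget_aligned[OF y(2) m] by blast
    then show ?thesis by auto
  qed
qed

lemma next_block:
  assumes P: "partial_cover P m" and len: "length P = 6*i+1" and i: "i < num_blocks"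
  shows "\<exists>P'. partial_cover P' (if straight_block ori i \<and> m < length gs then Suc m else m)
    \<and> length P' = 6 * Suc i + 1"
proof -
  have room: "length P + 6 \<le> len_bound" using len i by (simp add: len_bound_def)
  obtain P1 where P1: "partial_cover P1 (if straight_block ori i \<and> m < length gs then Suc m else m)"
    "length P1 \<le> length P + 5"
  proof (cases "straight_block ori i \<and> m < length gs")
    case True
    have pos: "length P = 6*i+1" "length P + 1 = 6*i+2" "length P + 2 = 6*i+3" "length P + 3 = 6*i+4"
      using len by simp_all
    have "ori (length P + 1) = ori (length P)" "ori (length P + 2) = ori (length P)"
      "ori (length P + 3) = ori (length P)"
      using True unfolding straight_block_def by (metis pos)+
    then obtain P' where "partial_cover P' (Suc m)" "length P' \<le> length P + 5"
      using insert_gadget[OF P _ room refl] True by blast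
    then show ?thesis using that True by auto
  next
    case False
    then show ?thesis using that P by auto
  qed
  then show ?thesis using extend_to[OF P1(1), of "6 * Suc i + 1"] len room by simp
qed

definition straight_count :: "nat \<Rightarrow> nat" where
  "straight_count k = card {j. j < k \<and> straight_block ori j}"

lemma all_blocks:
  "k \<le> num_blocks \<Longrightarrow> \<exists>P. partial_cover P (min (length gs) (straight_count k)) \<and> length P = 6*k+1"
proof (induction k)
  case 0 then show ?case using start_path by (simp add: straight_count_def)
next
  case (Suc k)
  then obtain P where P: "partial_cover P (min (length gs) (straight_count k))" "length P = 6*k+1"
    by auto
  have "{j. j < Suc k \<and> straight_block ori j} =
      {j. j < k \<and> straight_block ori j} \<union> (if straight_block ori k then {k} else {})"
    by (auto simp: less_Suc_eq)
  then have "straight_count (Suc k) = straight_count k + (if straight_block ori k then 1 else 0)"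
    unfolding straight_count_def by (auto simp: card_insert_if)
  then have "min (length gs) (straight_count (Suc k)) =
      (if straight_block ori k \<and> min (length gs) (straight_count k) < length gs
       then Suc (min (length gs) (straight_count k)) else min (length gs) (straight_count k))"
    by auto
  then show ?case using next_block[OF P] Suc.prems by simp
qed

text \<open>Bent blocks contain a change of direction of C, of which there are at most
  2 \<sigma>(C) + 1; so among num_blocks blocks at least |gadgets| are straight.\<close>
lemma enough_straight_blocks: "length gs \<le> straight_count num_blocks"
proof -
  have "6 * num_blocks < n" using len_bound_le_n by (simp add: len_bound_def)
  then have "card {j. j < num_blocks \<and> \<not> straight_block ori j} \<le> 2 * sigma_cyc n ori + 1"
    using few_bent_blocks[of num_blocks ori] sinks_le_sigma[of "6 * num_blocks"] by linarith
  moreover have "card {j. j < num_blocks \<and> \<not> straight_block ori j} + straight_count num_blocks = num_blocks"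
  proof -
    have "{j. j < num_blocks \<and> \<not> straight_block ori j} \<union> {j. j < num_blocks \<and> straight_block ori j} = {..<num_blocks}"
      by auto
    moreover have "card ({j. j < num_blocks \<and> \<not> straight_block ori j} \<union> {j. j < num_blocks \<and> straight_block ori j})
      = card {j. j < num_blocks \<and> \<not> straight_block ori j} + card {j. j < num_blocks \<and> straight_block ori j}"
      by (rule card_Un_disjoint) auto
    ultimately show ?thesis unfolding straight_count_def by simp
  qed
  ultimately show ?thesis by (simp add: num_blocks_def)
qed

lemma complete_path: "\<exists>P. partial_cover P (length gs) \<and> last P \<in> A \<and> length P \<le> 6 * num_blocks + 2"
proof -
  obtain P0 where P0: "partial_cover P0 (length gs)" "length P0 = 6 * num_blocks + 1"
    using all_blocks[of num_blocks] enough_straight_blocks by (auto simp: min_absorb1)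
  show ?thesis
  proof (cases "last P0 \<in> A")
    case True then show ?thesis using P0 by auto
  next
    case False
    then have "last P0 \<in> side False" using P0(1) by (auto simp: partial_cover_def good_def side_def)
    moreover have "length P0 < len_bound" using P0(2) by (simp add: len_bound_def)
    ultimately obtain y where "y \<in> good (\<not> False)" "partial_cover (P0 @ [y]) (length gs)"
      using extend_alternating[OF P0(1)] by blast
    then show ?thesis
      using P0(2) good_in_side[of True] by (intro exI[of _ "P0 @ [y]"]) (auto simp: side_def)
  qed
qed

text \<open>A finished path is an exceptional cover: it is a copy of the subpath of C from
  position 0, covers S \<union> T through the gadgets, and its balance 1 - (|B| - |A|)
  leaves |A \ P| + 1 = |B \ P|.\<close>
lemma exceptional_cover_from_path:
  assumes P: "partial_cover P (length gs)" and last: "last P \<in> A" and len: "length P \<le> n"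
  shows "exceptional_cover n ori V E A B S T P"
proof -
  have Pf: "P \<noteq> []" "distinct P" "set P \<subseteq> V" "hd P \<in> A" "orient_chain E ori 0 P"
    "set P \<inter> gadget_vertices = placed (length gs)"
    "balance P = (if last P \<in> A then 1 else 0) - int (shift_sum (length gs))"
    using P by (auto simp: partial_cover_def)
  have "copy_of_subpath n ori V E 0 P"
    unfolding copy_of_subpath_def
  proof (intro conjI allI impI)
    show "0 < n" using scales by simp
    fix m assume m: "Suc m < length P"
    then have "(0 + m) mod n = m" using len by simp
    then show "if ori ((0 + m) mod n) then E (P ! m) (P ! Suc m) else E (P ! Suc m) (P ! m)"
      using orient_chain_nth[OF Pf(5) m] by simp
  qed (use Pf len in auto)
  moreover have "S \<union> T \<subseteq> set P"
    using Pf(6) gadgets_cover unfolding placed_def gadget_vertices_def by auto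
  moreover have "card (A - set P) + 1 = card (B - set P)"
  proof -
    have "int (card (A \<inter> set P)) - int (card (B \<inter> set P)) = 1 - (int (card B) - int (card A))"
      using Pf(7) last shift_total card_le unfolding shift_sum_def balance_def by (simp add: of_nat_diff)
    moreover have "card (A - set P) = card A - card (A \<inter> set P)" "card (B - set P) = card B - card (B \<inter> set P)"
      using finite_parts by (simp_all add: card_Diff_subset_Int)
    moreover have "card (A \<inter> set P) \<le> card A" "card (B \<inter> set P) \<le> card B"
      using finite_parts by (simp_all add: card_mono)
    ultimately show ?thesis by linarith
  qed
  ultimately show ?thesis unfolding exceptional_cover_def using Pf(4) last by blast
qed

lemma short_exceptional_cover:
  "\<exists>P. exceptional_cover n ori V E A B S T P \<and> real (length P - 1) \<le> 21 * e4 * n"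
proof -
  obtain P where P: "partial_cover P (length gs)" "last P \<in> A" "length P \<le> 6 * num_blocks + 2"
    using complete_path by blast
  have "length P \<le> n" using P(3) len_bound_le_n by (simp add: len_bound_def)
  moreover have "real (length P - 1) \<le> real (6 * num_blocks + 1)" using P(3) by simp
  ultimately show ?thesis
    using exceptional_cover_from_path[OF P(1,2)] final_length by fastforce
qed

end

lemma (in exceptional_setup) short_exceptional_cover:
  "\<exists>P. exceptional_cover n ori V E A B S T P \<and> real (length P - 1) \<le> 21 * e4 * n"
proof -
  obtain gs where "gadget_system n V E A B S T ori e3 e4 gs"
    using gadgets_exist by (auto simp: gadget_system_def gadget_system_axioms_def exceptional_setup_axioms)
  then show ?thesis by (rule gadget_system.short_exceptional_cover)
qed

lemma exceptional_cover_for_large_n: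
  fixes eps3 eps4 :: real
  assumes eps4: "0 < eps4 \<and> eps4 \<le> 1/2000" and eps3: "0 < eps3 \<and> eps3 \<le> eps4/100"
    and n: "nat \<lceil>100 / eps4\<rceil> \<le> n"
    and G: "digraph V E \<and> card V = n \<and> min_semideg_ge V E (real n / 2) \<and>
      AB_conditions eps3 n V E A B S T \<and> real (sigma_cyc n ori) < eps4 * n"
  shows "\<exists>P. exceptional_cover n ori V E A B S T P \<and> real (length P - 1) \<le> 21 * eps4 * n"
proof -
  have "100 / eps4 \<le> real n"
    using n real_nat_ceiling_ge[of "100 / eps4"] of_nat_le_iff[of "nat \<lceil>100 / eps4\<rceil>" n] by linarith
  then have "100 \<le> eps4 * real n" using eps4 by (simp add: pos_divide_le_eq mult.commute)
  then interpret exceptional_setup n V E A B S T ori eps3 eps4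
    using G eps3 eps4 by unfold_locales auto
  show ?thesis by (rule short_exceptional_cover)
qed

theorem proposition6p3:
  shows "\<exists>e4max > (0::real). \<forall>eps4::real. 0 < eps4 \<and> eps4 \<le> e4max \<longrightarrow>
           (\<exists>e3max > 0. \<forall>eps3. 0 < eps3 \<and> eps3 \<le> e3max \<longrightarrow>
             (\<exists>N. \<forall>n \<ge> N. \<forall>V E A B S T (ori :: nat \<Rightarrow> bool).
                digraph V E \<and> card V = n \<and> min_semideg_ge V E (real n / 2) \<and>
                AB_conditions eps3 n V E A B S T \<and>
                real (sigma_cyc n ori) < eps4 * n \<longrightarrow>
                (\<exists>P. exceptional_cover n ori V E A B S T P \<and>
                     real (length P - 1) \<le> 21 * eps4 * n)))"
  apply (rule exI[of _ "1/2000"], intro conjI allI impI, simp)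
  subgoal for eps4
    apply (rule exI[of _ "eps4 / 100"], intro conjI allI impI, simp)
    subgoal for eps3
      apply (rule exI[of _ "nat \<lceil>100 / eps4\<rceil>"], intro allI impI)
      using exceptional_cover_for_large_n by blast
    done
  done

end
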